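(* Let $q=\{q_n\}_{n\geq1}$ be an (infinite) system of Beurling primes with $q_1>1$ and $\sigma_c(\zeta_q)<\infty$. Then for every $A>0$ there exists a system of Beurling primes $\tilde q=\{\tilde q_n\}_{n\geq1}$ such that $$|q_n-\tilde q_n|\leq q_n^{-A},\qquad n\in\mathbb{N},$$ and the Beurling integers $\{\tilde\nu_n\}_{n\geq1}$ generated by $\tilde q$ satisfy Bohr's condition: there exist $c_1,c_2>0$ with $\tilde\nu_{n+1}-\tilde\nu_n\geq c_1\tilde\nu_{n+1}^{-c_2}$ for all $n\in\mathbb{N}$.
   Context: A system of Beurling primes is an increasing sequence $q=\{q_n\}$ of real numbers with $1<q_n\to\infty$ such that $\{\log q_n\}$ is linearly independent over $\mathbb{Q}$. The Beurling integers are all finite products of elements of $q$ (including $1$), listed in increasing order as $\nu_1<\nu_2<\cdots$. $\zeta_q(s)=\sum_{n\geq1}\nu_n^{-s}$ and $\sigma_c(\zeta_q)$ is its abscissa of convergence. *)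

theory Defs
  imports "HOL-Analysis.Analysis"
begin

text \<open>A system of Beurling primes, indexed from 0 (q 0 is the paper's q_1).\<close>
definition beurling_primes :: "(nat \<Rightarrow> real) \<Rightarrow> bool" where
  "beurling_primes q \<longleftrightarrow>
     strict_mono q \<and> (\<forall>n. 1 < q n) \<and> filterlim q at_top sequentially \<and>
     (\<forall>F (c :: nat \<Rightarrow> rat). finite F \<longrightarrow>
        (\<Sum>i\<in>F. of_rat (c i) * ln (q i)) = 0 \<longrightarrow> (\<forall>i\<in>F. c i = 0))"

definition beurling_integers :: "(nat \<Rightarrow> real) \<Rightarrow> real set" where
  "beurling_integers q =
     {(\<Prod>i\<in>{i. e i \<noteq> 0}. q i ^ e i) | e :: nat \<Rightarrow> nat. finite {i. e i \<noteq> 0}}"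

text \<open>The Beurling integers listed in increasing order (nu q 0 is the paper's nu_1).\<close>
definition beurling_nu :: "(nat \<Rightarrow> real) \<Rightarrow> nat \<Rightarrow> real" where
  "beurling_nu q = (SOME f. strict_mono f \<and> range f = beurling_integers q)"

text \<open>sigma_c(zeta_q) < infinity: the Dirichlet series with positive terms converges
  for some (real) s.\<close>
definition abscissa_finite :: "(nat \<Rightarrow> real) \<Rightarrow> bool" where
  "abscissa_finite q \<longleftrightarrow> (\<exists>s::real. summable (\<lambda>n. beurling_nu q n powr (- s)))"

end

theory Submission
  imports Defs "HOL-Number_Theory.Prime_Powers"
begin

text \<open>
  Each prime q_n is replaced by a dyadic rational m_n / 2^k_n lying in a short window just
  below q_n, such that 2^k_n <= q_n^(c/2) for a single exponent c and m_n has an odd prime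
  factor dividing none of m_0, ..., m_(n-1). Every Beurling integer x of the new system is
  then a dyadic rational a / 2^K with 2^K <= x^c, so any two of them, x < y, differ by at least
  y^(-c), which is Bohr's condition; and the private prime factors make the logarithms of the
  new primes linearly independent over the rationals.

  A suitable m_n is a multiple of a prime p <= q_n^(c/2 - A - O(1)) that avoids the prime
  factors of m_0 ... m_(n-1). There are only O(n c log q_n) of those, and a finite abscissa of
  convergence forces n = O(q_n^s) for some s, so once c is large, Chebyshev's bound
  psi(2N) >= log (2N choose N) provides such a prime.
\<close>

section \<open>Chebyshev's lower bound for primes\<close>

lemma ln_fact_eq_sum_mangoldt:
  "ln (fact n :: real) = (\<Sum>d=1..n. mangoldt d * real (n div d))"
proof (induction n)
  case 0
  then show ?case by simp
next
  case (Suc n)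
  have "ln (real (Suc n)) = (\<Sum>d | d dvd Suc n. mangoldt d)"
    using mangoldt_sum[of "Suc n", where 'a=real] by simp
  also have "\<dots> = (\<Sum>d=1..Suc n. if d dvd Suc n then mangoldt d else 0)"
    by (rule sum.mono_neutral_cong_left)
      (auto simp: Suc_le_eq dvd_imp_le intro: dvd_pos_nat[of "Suc n"])
  finally have ln_Suc: "ln (real (Suc n)) = \<dots>" .
  have "(\<Sum>d=1..n. mangoldt d * real (n div d)) = (\<Sum>d=1..Suc n. mangoldt d * real (n div d))"
    by (rule sum.mono_neutral_left) auto
  then have "ln (fact (Suc n) :: real)
      = (\<Sum>d=1..Suc n. (if d dvd Suc n then mangoldt d else 0) + mangoldt d * real (n div d))"
    using Suc ln_Suc by (simp add: ln_mult fact_gt_zero sum.distrib del: of_nat_Suc)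
  also have "\<dots> = (\<Sum>d=1..Suc n. mangoldt d * real (Suc n div d))"
    by (rule sum.cong) (auto simp: div_Suc dvd_eq_mod_eq_0 algebra_simps)
  finally show ?case .
qed

lemma double_div_le: "(2 * n) div d \<le> 2 * (n div d) + (1::nat)"
proof (cases "d = 0")
  case False
  have "n mod d < d"
    using False by simp
  then have "(n mod d + n mod d) div d < 2"
    by (intro less_mult_imp_div_less) linarith
  moreover have "(n + n) div d = n div d + n div d + (n mod d + n mod d) div d"
    by (rule div_add1_eq)
  ultimately show ?thesis by (simp add: mult_2)
qed simp

lemma ln_central_binomial_le_sum_mangoldt:
  "ln (real ((2 * n) choose n)) \<le> (\<Sum>d=1..2*n. mangoldt d)"
proof -
  have "real ((2 * n) choose n) = fact (2 * n) / (fact n * fact n)"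
    by (simp add: binomial_fact)
  then have "ln (real ((2 * n) choose n)) = ln (fact (2 * n)) - 2 * ln (fact n :: real)"
    by (simp add: ln_div ln_mult fact_gt_zero)
  also have "ln (fact n :: real) = (\<Sum>d=1..2*n. mangoldt d * real (n div d))"
    unfolding ln_fact_eq_sum_mangoldt by (rule sum.mono_neutral_left) auto
  finally have "ln (real ((2 * n) choose n))
      = (\<Sum>d=1..2*n. mangoldt d * (real ((2 * n) div d) - 2 * real (n div d)))"
    by (simp add: ln_fact_eq_sum_mangoldt sum_subtractf sum_distrib_left algebra_simps)
  also have "\<dots> \<le> (\<Sum>d=1..2*n. mangoldt d)"
  proof (rule sum_mono)
    fix d
    have "real ((2 * n) div d) \<le> 2 * real (n div d) + 1"
      using double_div_le[of n d] by linarith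
    then show "mangoldt d * (real ((2 * n) div d) - 2 * real (n div d)) \<le> mangoldt d"
      using mangoldt_nonneg[of d] by (simp add: mult_left_le)
  qed
  finally show ?thesis .
qed

lemma card_exponents_le:
  assumes "prime p" "1 \<le> M"
  shows "real (card {k. 1 \<le> k \<and> p ^ k \<le> M}) * ln (real p) \<le> ln (real M)"
proof -
  have lp: "ln (real p) > 0"
    using prime_ge_2_nat[OF assms(1)] by simp
  have "{k. 1 \<le> k \<and> p ^ k \<le> M} \<subseteq> {1..nat \<lfloor>ln (real M) / ln (real p)\<rfloor>}"
  proof
    fix k assume k: "k \<in> {k. 1 \<le> k \<and> p ^ k \<le> M}"
    then have "real p ^ k \<le> real M"
      by (simp flip: of_nat_power)
    then have "ln (real p ^ k) \<le> ln (real M)"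
      using prime_gt_0_nat[OF assms(1)] assms(2) by (subst ln_le_cancel_iff) auto
    then have "real k \<le> ln (real M) / ln (real p)"
      using lp prime_gt_0_nat[OF assms(1)] by (simp add: ln_realpow field_simps)
    then show "k \<in> {1..nat \<lfloor>ln (real M) / ln (real p)\<rfloor>}"
      using k by (auto simp: le_nat_floor)
  qed
  then have "card {k. 1 \<le> k \<and> p ^ k \<le> M} \<le> nat \<lfloor>ln (real M) / ln (real p)\<rfloor>"
    by (metis card_atLeastAtMost card_mono finite_atLeastAtMost diff_Suc_1)
  moreover have "0 \<le> ln (real M) / ln (real p)"
    using lp assms(2) by simp
  ultimately have "real (card {k. 1 \<le> k \<and> p ^ k \<le> M}) \<le> ln (real M) / ln (real p)"
    by linarith
  then show ?thesis
    using lp by (simp add: field_simps)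
qed

lemma sum_mangoldt_le_card_mult_ln:
  assumes "finite S" and primes_in_S: "\<And>p. prime p \<Longrightarrow> p \<le> M \<Longrightarrow> p \<in> S" and "1 \<le> M"
  shows "(\<Sum>d=1..M. mangoldt d) \<le> real (card S) * ln (real M)"
proof -
  define K where "K p = {k::nat. 1 \<le> k \<and> p ^ k \<le> M}" for p
  define Sp where "Sp = {p\<in>S. prime p}"
  have finK: "finite (K p)" if "prime p" for p
  proof (rule finite_subset)
    show "K p \<subseteq> {..M}"
    proof
      fix k assume "k \<in> K p"
      moreover have "k < p ^ k"
        using less_exp[of k] power_mono[of 2 p k] prime_ge_2_nat[OF that] by linarith
      ultimately show "k \<in> {..M}" by (simp add: K_def)
    qed
  qed simp
  define I where "I = (SIGMA p:Sp. K p)"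
  have finI: "finite I"
    unfolding I_def using assms(1) finK by (intro finite_SigmaI) (auto simp: Sp_def)
  have "(\<Sum>d=1..M. mangoldt d) = (\<Sum>d\<in>{d\<in>{1..M}. primepow d}. mangoldt d :: real)"
    by (rule sum.mono_neutral_right) (auto simp: mangoldt_def)
  also have "\<dots> \<le> (\<Sum>d\<in>(\<lambda>(p,k). p ^ k) ` I. mangoldt d)"
  proof (rule sum_mono2)
    show "{d\<in>{1..M}. primepow d} \<subseteq> (\<lambda>(p,k). p ^ k) ` I"
    proof
      fix d assume d: "d \<in> {d\<in>{1..M}. primepow d}"
      then obtain p k where pk: "prime p" "k > 0" "d = p ^ k" by (auto simp: primepow_def)
      have "p \<le> d" using pk prime_ge_1_nat[of p] by (simp add: self_le_power)
      then show "d \<in> (\<lambda>(p,k). p ^ k) ` I"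
        using d pk primes_in_S by (auto simp: I_def Sp_def K_def)
    qed
  qed (use finI in \<open>auto simp: mangoldt_nonneg\<close>)
  also have "\<dots> \<le> sum ((mangoldt :: nat \<Rightarrow> real) \<circ> (\<lambda>(p,k). p ^ k)) I"
    by (rule sum_image_le[OF finI]) (simp add: mangoldt_nonneg)
  also have "\<dots> = (\<Sum>(p,k)\<in>I. mangoldt (p ^ k))"
    by (simp add: o_def case_prod_unfold)
  also have "\<dots> = (\<Sum>p\<in>Sp. \<Sum>k\<in>K p. mangoldt (p ^ k))"
    unfolding I_def using assms(1) finK by (subst sum.Sigma) (auto simp: Sp_def)
  also have "\<dots> = (\<Sum>p\<in>Sp. real (card (K p)) * ln (real p))"
    by (rule sum.cong) (auto simp: Sp_def K_def)
  also have "\<dots> \<le> (\<Sum>p\<in>Sp. ln (real M))"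
    using card_exponents_le assms(3) by (intro sum_mono) (auto simp: Sp_def K_def)
  also have "\<dots> \<le> real (card S) * ln (real M)"
    using assms(1,3) by (auto simp: Sp_def intro!: mult_right_mono card_mono)
  finally show ?thesis .
qed

lemma ex_prime_le_notin:
  assumes "finite S" "4 \<le> y" "(real (card S) + 1) * ln y < y / 2 * ln 2"
  shows "\<exists>p. prime p \<and> real p \<le> y \<and> p \<notin> S"
proof (rule ccontr)
  assume "\<not> ?thesis"
  then have primes_in_S: "\<And>p. prime p \<Longrightarrow> real p \<le> y \<Longrightarrow> p \<in> S" by blast
  define N where "N = nat \<lfloor>y / 2\<rfloor>"
  have N_ge: "y / 4 \<le> real N" and N_le: "real (2 * N) \<le> y" and "0 < N"
    unfolding N_def using assms(2) by linarith+
  have "ln (4 ^ N / (2 * real N)) \<le> ln (real ((2 * N) choose N))"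
    using central_binomial_lower_bound[OF \<open>0 < N\<close>] \<open>0 < N\<close> by simp
  also have "\<dots> \<le> (\<Sum>d=1..2*N. mangoldt d)"
    by (rule ln_central_binomial_le_sum_mangoldt)
  also have "\<dots> \<le> real (card S) * ln (real (2 * N))"
    using primes_in_S N_le \<open>0 < N\<close> by (intro sum_mangoldt_le_card_mult_ln[OF assms(1)]) auto
  finally have "real N * ln 4 \<le> (real (card S) + 1) * ln (real (2 * N))"
    using \<open>0 < N\<close> by (simp add: ln_div ln_realpow algebra_simps)
  also have "\<dots> \<le> (real (card S) + 1) * ln y"
    using N_le \<open>0 < N\<close> by (intro mult_left_mono) auto
  finally have "real N * (2 * ln 2) \<le> (real (card S) + 1) * ln y"
    using ln_realpow[of 2 2] by simp
  moreover have "y / 2 * ln 2 \<le> (real N * 2) * ln 2"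
    using N_ge by (intro mult_right_mono) auto
  ultimately show False
    using assms(3) by linarith
qed

lemma two_power_card_prime_factors_le:
  assumes "0 < (n::nat)"
  shows "2 ^ card (prime_factors n) \<le> n"
proof -
  have "2 ^ card (prime_factors n) = (\<Prod>p\<in>prime_factors n. (2::nat))" by simp
  also have "\<dots> \<le> (\<Prod>p\<in>prime_factors n. p ^ multiplicity p n)"
  proof (rule prod_mono)
    fix p assume p: "p \<in> prime_factors n"
    then have "2 \<le> p" and "1 \<le> multiplicity p n"
      using assms by (auto simp: prime_factors_multiplicity Suc_le_eq intro: prime_ge_2_nat)
    moreover have "p \<le> p ^ multiplicity p n"
      using \<open>1 \<le> multiplicity p n\<close> \<open>2 \<le> p\<close> by (simp add: self_le_power)
    ultimately show "0 \<le> (2::nat) \<and> 2 \<le> p ^ multiplicity p n"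
      by simp
  qed
  also have "\<dots> = n" using assms by (simp add: prime_factorization_nat[symmetric])
  finally show ?thesis .
qed

lemma card_prime_factors_mult_ln2_le:
  assumes "0 < (n::nat)"
  shows "real (card (prime_factors n)) * ln 2 \<le> ln (real n)"
proof -
  have "real (2 ^ card (prime_factors n)) \<le> real n"
    using two_power_card_prime_factors_le[OF assms] by linarith
  then have "ln (2 ^ card (prime_factors n)) \<le> ln (real n)"
    using assms by simp
  then show ?thesis
    by (simp add: ln_realpow)
qed

lemma ex_prime_le_not_dvd:
  assumes "0 < P" "4 \<le> y" "(real (card (prime_factors P)) + 2) * ln y < y / 2 * ln 2"
  shows "\<exists>p. prime p \<and> p \<noteq> 2 \<and> \<not> p dvd P \<and> real p \<le> y"
proof -
  define S where "S = insert 2 (prime_factors P)"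
  have "real (card S) + 1 \<le> real (card (prime_factors P)) + 2"
    by (simp add: S_def card_insert_if)
  then have "(real (card S) + 1) * ln y < y / 2 * ln 2"
    using assms(2,3) by (smt (verit) ln_ge_zero mult_right_mono)
  then obtain p where "prime p" "real p \<le> y" "p \<notin> S"
    using ex_prime_le_notin[of S y] assms(2) by (auto simp: S_def)
  then show ?thesis
    using assms(1) by (auto simp: S_def in_prime_factors_iff)
qed

section \<open>Beurling integers\<close>

lemma card_less_bij_betw:
  fixes T :: "'a::linorder set"
  assumes inf: "infinite T" and fin: "\<And>t. finite {u\<in>T. u < t}"
  defines "g \<equiv> \<lambda>t. card {u\<in>T. u < t}"
  shows "strict_mono_on T g" "bij_betw g T UNIV"
proof -
  show g_less: "strict_mono_on T g"
  proof (rule strict_mono_onI)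
    fix t t' assume "t \<in> T" "t' \<in> T" "t < t'"
    then have "{u\<in>T. u < t} \<subset> {u\<in>T. u < t'}" by auto
    then show "g t < g t'" unfolding g_def by (rule psubset_card_mono[OF fin])
  qed
  then have ginj: "inj_on g T"
    by (rule strict_mono_on_imp_inj_on)
  have "\<exists>t\<in>T. g t = N" for N
  proof -
    have "infinite (g ` T)" using inf ginj finite_imageD by blast
    then obtain t where t: "t \<in> T" "N \<le> g t"
      unfolding infinite_nat_iff_unbounded_le by auto
    define B where "B = {u\<in>T. u < t}"
    have "g ` B \<subseteq> {..<g t}" using g_less t unfolding B_def by (auto dest: strict_mono_onD)
    moreover have "card (g ` B) = g t"
      using inj_on_subset[OF ginj] by (subst card_image) (auto simp: B_def g_def)
    ultimately have "g ` B = {..<g t}"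
      by (intro card_subset_eq) auto
    show ?thesis
    proof (cases "g t = N")
      case False
      then have "N \<in> g ` B" using t \<open>g ` B = {..<g t}\<close> by auto
      then show ?thesis unfolding B_def by auto
    qed (use t in blast)
  qed
  then show "bij_betw g T UNIV"
    using ginj unfolding bij_betw_def by (metis UNIV_I image_iff subsetI subset_antisym top_greatest)
qed

lemma strict_mono_enumeration_exists:
  fixes T :: "'a::linorder set"
  assumes "infinite T" and fin: "\<And>b. finite {t\<in>T. t \<le> b}"
  shows "\<exists>f::nat \<Rightarrow> 'a. strict_mono f \<and> range f = T"
proof -
  define g where "g t = card {u\<in>T. u < t}" for t
  have "finite {u\<in>T. u < t}" for t
    by (rule finite_subset[OF _ fin[of t]]) auto
  then have g: "strict_mono_on T g" "bij_betw g T UNIV"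
    using card_less_bij_betw[OF assms(1)] unfolding g_def by blast+
  define f where "f = inv_into T g"
  have f: "bij_betw f UNIV T" "\<And>N. g (f N) = N"
    using g(2) by (auto simp: f_def bij_betw_inv_into bij_betw_inv_into_right)
  have "strict_mono f"
  proof (rule strict_monoI)
    fix M N :: nat assume "M < N"
    show "f M < f N"
    proof (rule ccontr)
      assume "\<not> f M < f N"
      moreover have "f M \<in> T" "f N \<in> T"
        using f(1) by (auto dest: bij_betwE)
      ultimately have "g (f N) \<le> g (f M)"
        using g(1) by (cases "f N = f M") (auto dest: strict_mono_onD)
      then show False using f(2) \<open>M < N\<close> by simp
    qed
  qed
  moreover have "range f = T"
    using f(1) by (simp add: bij_betw_def)
  ultimately show ?thesis by blast
qed

lemma one_le_beurling_integer:
  assumes "\<And>i. 1 \<le> q i" "x \<in> beurling_integers q"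
  shows "1 \<le> x"
  using assms(2) unfolding beurling_integers_def
  by (auto intro!: prod_ge_1 one_le_power assms(1))

lemma beurling_prime_in_integers: "q i \<in> beurling_integers q"
proof -
  have "{j. (if j = i then 1 else 0::nat) \<noteq> 0} = {i}" by auto
  then show ?thesis unfolding beurling_integers_def
    by (intro CollectI exI[of _ "\<lambda>j. if j = i then 1 else 0"]) simp
qed

lemma one_in_beurling_integers: "1 \<in> beurling_integers q"
  unfolding beurling_integers_def by (intro CollectI exI[of _ "\<lambda>_. 0"]) simp

lemma infinite_beurling_integers:
  assumes "inj q"
  shows "infinite (beurling_integers q)"
proof
  assume "finite (beurling_integers q)"
  then have "finite (range q)"
    by (rule finite_subset[rotated]) (auto intro: beurling_prime_in_integers)
  then show False using assms finite_imageD by (metis infinite_UNIV_nat)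
qed

lemma finite_beurling_integers_le:
  fixes q :: "nat \<Rightarrow> real"
  assumes r: "1 < r" "\<And>i. r \<le> q i" and lim: "filterlim q at_top sequentially"
  shows "finite {x \<in> beurling_integers q. x \<le> b}"
proof -
  from lim obtain I where I: "\<And>i. I \<le> i \<Longrightarrow> b < q i"
    by (auto simp: filterlim_at_top_dense eventually_sequentially)
  have q_ge1: "1 \<le> q i" for i
    using r(1) r(2)[of i] by linarith
  define E where "E = nat \<lceil>(b - 1) / (r - 1)\<rceil>"
  define g where "g e = (\<Prod>i | e i \<noteq> 0. q i ^ e i)" for e :: "nat \<Rightarrow> nat"
  define FS where "FS = {e::nat \<Rightarrow> nat. \<forall>i. (i \<in> {..<I} \<longrightarrow> e i \<in> {..E}) \<and> (i \<notin> {..<I} \<longrightarrow> e i = 0)}"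
  have "{x \<in> beurling_integers q. x \<le> b} \<subseteq> g ` FS"
  proof
    fix x assume x: "x \<in> {x \<in> beurling_integers q. x \<le> b}"
    then obtain e where e: "finite {i. e i \<noteq> 0}" "x = g e"
      unfolding beurling_integers_def g_def by auto
    have power_le_b: "q i ^ e i \<le> b" if "e i \<noteq> 0" for i
    proof -
      have "(\<Prod>j\<in>{i}. q j ^ e j) \<le> g e"
        unfolding g_def using e(1) that q_ge1
        by (intro prod_mono2) (auto intro!: one_le_power order.trans[OF zero_le_one])
      then show ?thesis using x e by simp
    qed
    have "e i = 0" if "I \<le> i" for i
    proof (rule ccontr)
      assume "e i \<noteq> 0"
      then have "q i \<le> q i ^ e i"
        using r(1) r(2)[of i] by (intro self_le_power) auto
      with power_le_b[OF \<open>e i \<noteq> 0\<close>] I[OF that] show False by simp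
    qed
    moreover have "e i \<le> E" if "e i \<noteq> 0" for i
    proof -
      have "1 + real (e i) * (r - 1) \<le> (1 + (r - 1)) ^ e i"
        using r by (intro Bernoulli_inequality) auto
      also have "\<dots> \<le> q i ^ e i" using r(1) r(2)[of i] by (intro power_mono) auto
      also have "\<dots> \<le> b" by (rule power_le_b[OF that])
      finally have "real (e i) \<le> (b - 1) / (r - 1)" using r by (simp add: field_simps)
      then show ?thesis unfolding E_def by linarith
    qed
    ultimately have "e \<in> FS"
      unfolding FS_def by (auto simp: not_less) (metis le0 gr0I)
    then show "x \<in> g ` FS" using e by auto
  qed
  moreover have "finite FS"
    unfolding FS_def by (rule finite_set_of_finite_funs) auto
  ultimately show ?thesis by (rule finite_subset[OF _ finite_imageI])
qed

lemma beurling_primes_ge_first: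
  assumes "beurling_primes q"
  shows "q 0 \<le> q i" "1 < q 0"
  using assms by (auto simp: beurling_primes_def strict_mono_less_eq)

lemma beurling_nu_enumerates:
  assumes "beurling_primes q"
  shows "strict_mono (beurling_nu q) \<and> range (beurling_nu q) = beurling_integers q"
proof -
  have "inj q" and lim: "filterlim q at_top sequentially"
    using assms strict_mono_imp_inj_on by (auto simp: beurling_primes_def)
  have "\<exists>f::nat \<Rightarrow> real. strict_mono f \<and> range f = beurling_integers q"
    using finite_beurling_integers_le[OF _ _ lim] beurling_primes_ge_first[OF assms]
    by (intro strict_mono_enumeration_exists infinite_beurling_integers \<open>inj q\<close>) blast+
  then show ?thesis unfolding beurling_nu_def by (rule someI_ex)
qed

text \<open>1, q_0, ..., q_n are n + 2 distinct Beurling integers not exceeding q_n.\<close>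

lemma beurling_nu_Suc_le:
  assumes "beurling_primes q"
  shows "beurling_nu q (Suc n) \<le> q n"
proof (rule ccontr)
  define nu where "nu = beurling_nu q"
  have nu: "strict_mono nu" "range nu = beurling_integers q"
    using beurling_nu_enumerates[OF assms] by (auto simp: nu_def)
  have sm: "strict_mono q" and q1: "\<And>i. 1 < q i"
    using assms by (auto simp: beurling_primes_def)
  assume "\<not> beurling_nu q (Suc n) \<le> q n"
  then have lt: "q n < nu (Suc n)" by (simp add: nu_def)
  define B where "B = insert 1 (q ` {..n})"
  have "1 \<notin> q ` {..n}"
    using q1 by (metis imageE less_irrefl)
  then have "card B = Suc (Suc n)"
    unfolding B_def using strict_mono_imp_inj_on[OF sm]
    by (simp add: card_image inj_on_subset)
  moreover have "B \<subseteq> nu ` {..n}"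
  proof
    fix t assume t: "t \<in> B"
    then have "t \<le> q n"
      unfolding B_def using q1[of n] by (auto simp: strict_mono_less_eq[OF sm])
    moreover have "t \<in> range nu"
      using t unfolding B_def nu(2)
      by (auto intro: beurling_prime_in_integers one_in_beurling_integers)
    then obtain j where j: "t = nu j" by blast
    ultimately have "j \<le> n"
      using lt strict_mono_less_eq[OF nu(1), of "Suc n" j] by linarith
    then show "t \<in> nu ` {..n}" using j by auto
  qed
  then have "card B \<le> Suc n"
    using card_image_le[of "{..n}" nu] card_mono[of "nu ` {..n}" B] by simp
  ultimately show False by simp
qed

lemma abscissa_finite_imp_index_le_power:
  assumes "beurling_primes q" "abscissa_finite q"
  obtains s S where "0 < s" "1 \<le> S" "\<And>n. real n + 2 \<le> S * q n powr s"
proof -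
  define nu where "nu = beurling_nu q"
  have nu: "strict_mono nu" "range nu = beurling_integers q"
    using beurling_nu_enumerates[OF assms(1)] by (auto simp: nu_def)
  have q1: "\<And>i. 1 \<le> q i"
    using assms(1) by (auto simp: beurling_primes_def less_imp_le)
  have nu1: "1 \<le> nu j" for j
    using nu(2) by (intro one_le_beurling_integer[of q, OF q1]) blast
  obtain s where s: "summable (\<lambda>n. nu n powr (- s))"
    using assms(2) unfolding abscissa_finite_def nu_def by blast
  have "0 < s"
  proof (rule ccontr)
    assume "\<not> 0 < s"
    then have "\<And>n. 1 \<le> nu n powr (- s)" using nu1 by (intro ge_one_powr_ge_zero) auto
    moreover have "(\<lambda>n. nu n powr (- s)) \<longlonglongrightarrow> 0" by (rule summable_LIMSEQ_zero[OF s])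
    ultimately show False
      using LIMSEQ_le_const[of _ 0 1] by fastforce
  qed
  define S where "S = max 1 (suminf (\<lambda>n. nu n powr (- s)))"
  have "real n + 2 \<le> S * q n powr s" for n
  proof -
    have "(\<Sum>j<Suc (Suc n). q n powr (- s)) \<le> (\<Sum>j<Suc (Suc n). nu j powr (- s))"
    proof (rule sum_mono)
      fix j assume "j \<in> {..<Suc (Suc n)}"
      then have "nu j \<le> q n"
        using beurling_nu_Suc_le[OF assms(1), of n] strict_mono_less_eq[OF nu(1), of j "Suc n"]
        by (simp add: nu_def)
      then show "q n powr (- s) \<le> nu j powr (- s)"
        using \<open>0 < s\<close> nu1[of j] by (intro powr_mono2') auto
    qed
    also have "\<dots> \<le> S"
      unfolding S_def using sum_le_suminf[OF s, of "{..<Suc (Suc n)}"] powr_ge_zero by force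
    finally have "(real n + 2) * q n powr (- s) \<le> S"
      by (simp add: add.commute)
    then have "(real n + 2) * q n powr (- s) * q n powr s \<le> S * q n powr s"
      by (intro mult_right_mono) auto
    then show ?thesis
      using q1[of n] by (simp add: powr_minus mult.assoc)
  qed
  moreover have "1 \<le> S" by (simp add: S_def)
  ultimately show thesis
    using that \<open>0 < s\<close> by blast
qed

section \<open>Dyadic Beurling primes\<close>

lemma ex_common_denominator:
  fixes c :: "nat \<Rightarrow> rat"
  assumes "finite F"
  shows "\<exists>d::int. 0 < d \<and> (\<forall>i\<in>F. \<exists>w::int. of_int d * c i = of_int w)"
  using assms
proof (induction F rule: finite_induct)
  case empty
  show ?case by (intro exI[of _ 1]) simp
next
  case (insert x F)
  then obtain d where d: "0 < d" "\<forall>i\<in>F. \<exists>w::int. of_int d * c i = of_int w" by blast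
  obtain a b where ab: "quotient_of (c x) = (a, b)" by (cases "quotient_of (c x)") auto
  have b: "0 < b" using quotient_of_denom_pos[OF ab] .
  have cx: "c x = of_int a / of_int b" using quotient_of_div[OF ab] .
  show ?case
  proof (rule exI[of _ "d * b"], intro conjI ballI)
    show "0 < d * b" using d b by simp
  next
    fix i assume "i \<in> insert x F"
    then show "\<exists>w::int. of_int (d * b) * c i = of_int w"
    proof
      assume "i = x"
      then show ?thesis using b cx by (intro exI[of _ "d * a"]) (simp add: field_simps)
    next
      assume "i \<in> F"
      then obtain w where "of_int d * c i = of_int w" using d by blast
      then show ?thesis by (intro exI[of _ "w * b"]) (simp add: field_simps)
    qed
  qed
qed

lemma multiplicity_prod_power:
  fixes m a :: "nat \<Rightarrow> nat"
  assumes "prime p" "finite F" "\<And>i. 0 < m i"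
  shows "multiplicity p (\<Prod>i\<in>F. m i ^ a i) = (\<Sum>i\<in>F. a i * multiplicity p (m i))"
proof -
  have pe: "prime_elem p" using assms(1) by simp
  have "multiplicity p (\<Prod>i\<in>F. m i ^ a i) = (\<Sum>i\<in>F. multiplicity p (m i ^ a i))"
    using assms(2,3) by (intro prime_elem_multiplicity_prod_distrib[OF pe]) (auto simp: image_iff)
  also have "\<dots> = (\<Sum>i\<in>F. a i * multiplicity p (m i))"
    using assms(3) by (intro sum.cong refl prime_elem_multiplicity_power_distrib[OF pe]) (simp add: gr0_conv_Suc)
  finally show ?thesis .
qed

lemma multiplicity_dyadic_prod_single:
  fixes m a :: "nat \<Rightarrow> nat"
  assumes "prime p" "p \<noteq> 2" "finite F" "n \<in> F" "\<And>i. 0 < m i"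
    and others: "\<And>i. i \<in> F \<Longrightarrow> i \<noteq> n \<Longrightarrow> a i = 0 \<or> \<not> p dvd m i"
  shows "multiplicity p ((\<Prod>i\<in>F. m i ^ a i) * 2 ^ j) = a n * multiplicity p (m n)"
proof -
  have "multiplicity p ((\<Prod>i\<in>F. m i ^ a i) * 2 ^ j) = (\<Sum>i\<in>F. a i * multiplicity p (m i))"
    using assms multiplicity_distinct_prime_power[of p 2 j]
    by (simp add: prime_elem_multiplicity_mult_distrib multiplicity_prod_power prod_pos)
  also have "\<dots> = a n * multiplicity p (m n) + (\<Sum>i\<in>F - {n}. a i * multiplicity p (m i))"
    using assms(3,4) by (rule sum.remove)
  also have "(\<Sum>i\<in>F - {n}. a i * multiplicity p (m i)) = 0"
  proof (intro sum.neutral ballI)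
    fix i assume "i \<in> F - {n}"
    then show "a i * multiplicity p (m i) = 0"
      using others[of i] by (auto simp: not_dvd_imp_multiplicity_0)
  qed
  finally show ?thesis by simp
qed

lemma dyadic_prod_eq_if_sum_ln_eq_0:
  fixes m k :: "nat \<Rightarrow> nat" and w :: "nat \<Rightarrow> int"
  assumes "finite F" "\<And>i. 0 < m i" and sum0: "(\<Sum>i\<in>F. of_int (w i) * ln (real (m i) / 2 ^ k i)) = 0"
  shows "(\<Prod>i\<in>F. m i ^ nat (w i)) * 2 ^ (\<Sum>i\<in>F. nat (- w i) * k i)
       = (\<Prod>i\<in>F. m i ^ nat (- w i)) * 2 ^ (\<Sum>i\<in>F. nat (w i) * k i)"
    (is "?X = ?Y")
proof -
  have split_int: "real_of_int z = real (nat z) - real (nat (- z))" for z :: int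
    by (cases "0 \<le> z") simp_all
  have ln_prod: "ln (real ((\<Prod>i\<in>F. m i ^ a i) * 2 ^ (\<Sum>i\<in>F. b i * k i)))
      = (\<Sum>i\<in>F. real (a i) * ln (real (m i)) + real (b i) * real (k i) * ln 2)" for a b
  proof -
    have "ln (real ((\<Prod>i\<in>F. m i ^ a i) * 2 ^ (\<Sum>i\<in>F. b i * k i)))
        = (\<Sum>i\<in>F. real (a i) * ln (real (m i))) + real (\<Sum>i\<in>F. b i * k i) * ln 2"
      using assms(1,2) by (simp add: ln_mult ln_prod ln_realpow prod_pos)
    then show ?thesis by (simp add: sum.distrib sum_distrib_right)
  qed
  have "ln (real ?X) - ln (real ?Y)
      = (\<Sum>i\<in>F. (real (nat (w i)) * ln (real (m i)) + real (nat (- w i)) * real (k i) * ln 2)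
                 - (real (nat (- w i)) * ln (real (m i)) + real (nat (w i)) * real (k i) * ln 2))"
    unfolding ln_prod sum_subtractf ..
  also have "\<dots> = (\<Sum>i\<in>F. of_int (w i) * ln (real (m i) / 2 ^ k i))"
    using assms(2) by (intro sum.cong refl) (simp add: ln_div ln_realpow split_int algebra_simps)
  finally have "ln (real ?X) - ln (real ?Y) = \<dots>" .
  then have "ln (real ?X) = ln (real ?Y)"
    using sum0 by simp
  moreover have "0 < real ?X" "0 < real ?Y"
    using assms(1,2) by (auto simp: prod_pos)
  ultimately have "real ?X = real ?Y"
    using ln_inj_iff by blast
  then show ?thesis
    by (simp only: of_nat_eq_iff)
qed

text \<open>
  Clearing denominators turns a vanishing rational combination of the ln (m_i / 2^k_i) into an
  identity between two natural numbers; the private prime of the largest index with a nonzero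
  coefficient divides only one of them.
\<close>

lemma ln_dyadic_independent_if_private_primes:
  fixes m k :: "nat \<Rightarrow> nat" and c :: "nat \<Rightarrow> rat"
  assumes "\<And>i. 0 < m i"
    and private_prime: "\<And>n. \<exists>p. prime p \<and> p \<noteq> 2 \<and> p dvd m n \<and> (\<forall>i<n. \<not> p dvd m i)"
    and "finite F" and sum0: "(\<Sum>i\<in>F. of_rat (c i) * ln (real (m i) / 2 ^ k i)) = 0"
  shows "\<forall>i\<in>F. c i = 0"
proof (rule ccontr)
  obtain d :: int where d: "0 < d" "\<forall>i\<in>F. \<exists>w::int. of_int d * c i = of_int w"
    using ex_common_denominator[OF \<open>finite F\<close>] by blast
  from bchoice[OF d(2)] obtain w where w: "\<forall>i\<in>F. of_int d * c i = of_int (w i)" ..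
  have w_real: "real_of_int (w i) = real_of_int d * of_rat (c i)" if "i \<in> F" for i
    using arg_cong[OF w[rule_format, OF that], of real_of_rat] by (simp add: of_rat_mult)
  have w0: "w i = 0 \<longleftrightarrow> c i = 0" if "i \<in> F" for i
    using w_real[OF that] d(1) by auto
  assume "\<not> (\<forall>i\<in>F. c i = 0)"
  define G where "G = {i\<in>F. w i \<noteq> 0}"
  define n where "n = Max G"
  have "finite G" "G \<noteq> {}"
    using \<open>finite F\<close> \<open>\<not> (\<forall>i\<in>F. c i = 0)\<close> w0 by (auto simp: G_def)
  then have "n \<in> F" "w n \<noteq> 0" and n_max: "\<And>i. i \<in> G \<Longrightarrow> i \<le> n"
    using Max_in[of G] by (auto simp: n_def G_def)
  obtain p where p: "prime p" "p \<noteq> 2" "p dvd m n" "\<forall>i<n. \<not> p dvd m i"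
    using private_prime by blast
  have "(\<Sum>i\<in>F. of_int (w i) * ln (real (m i) / 2 ^ k i))
      = real_of_int d * (\<Sum>i\<in>F. of_rat (c i) * ln (real (m i) / 2 ^ k i))"
    by (simp add: sum_distrib_left w_real mult.assoc)
  then have eq: "(\<Prod>i\<in>F. m i ^ nat (w i)) * 2 ^ (\<Sum>i\<in>F. nat (- w i) * k i)
       = (\<Prod>i\<in>F. m i ^ nat (- w i)) * 2 ^ (\<Sum>i\<in>F. nat (w i) * k i)"
    using sum0 by (intro dyadic_prod_eq_if_sum_ln_eq_0[OF \<open>finite F\<close> assms(1)]) simp
  have others: "w i = 0 \<or> \<not> p dvd m i" if "i \<in> F" "i \<noteq> n" for i
  proof (cases "w i = 0")
    case False
    then have "i < n" using that n_max[of i] by (simp add: G_def)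
    then show ?thesis using p(4) by blast
  qed simp
  have "multiplicity p ((\<Prod>i\<in>F. m i ^ nat (a * w i)) * 2 ^ j) = nat (a * w n) * multiplicity p (m n)"
    if "a = 1 \<or> a = - 1" for a :: int and j
    using that
    by (intro multiplicity_dyadic_prod_single[OF p(1,2) \<open>finite F\<close> \<open>n \<in> F\<close> assms(1)])
      (auto dest!: others)
  from this[of 1] this[of "- 1"] have "nat (w n) * multiplicity p (m n) = nat (- w n) * multiplicity p (m n)"
    using arg_cong[OF eq, of "multiplicity p"] by simp
  moreover have "0 < multiplicity p (m n)"
    using p assms(1)[of n] by (simp add: prime_multiplicity_gt_zero_iff)
  ultimately show False
    using \<open>w n \<noteq> 0\<close> by simp
qed

lemma beurling_primes_if_dyadic_private_primes:
  fixes m k :: "nat \<Rightarrow> nat"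
  assumes "strict_mono q" "\<And>n. 1 < q n" "filterlim q at_top sequentially"
    and dyadic: "\<And>n. q n = real (m n) / 2 ^ k n" and "\<And>n. 0 < m n"
    and "\<And>n. \<exists>p. prime p \<and> p \<noteq> 2 \<and> p dvd m n \<and> (\<forall>i<n. \<not> p dvd m i)"
  shows "beurling_primes q"
  unfolding beurling_primes_def
proof (intro conjI allI impI)
  fix F and c :: "nat \<Rightarrow> rat"
  assume "finite F" "(\<Sum>i\<in>F. of_rat (c i) * ln (q i)) = 0"
  then show "\<forall>i\<in>F. c i = 0"
    using ln_dyadic_independent_if_private_primes[OF assms(5,6), of F c k] by (simp add: dyadic)
qed (use assms in auto)

lemma dyadic_gap:
  fixes a b :: nat
  assumes "real a / 2 ^ K < real b / 2 ^ L"
  shows "1 / 2 ^ max K L \<le> real b / 2 ^ L - real a / 2 ^ K"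
proof -
  define M where "M = max K L"
  have "real a / 2 ^ K * 2 ^ M = real a * 2 ^ (M - K)" "real b / 2 ^ L * 2 ^ M = real b * 2 ^ (M - L)"
    unfolding M_def by (simp_all add: field_simps power_diff)
  then have eq: "(real b / 2 ^ L - real a / 2 ^ K) * 2 ^ M = real (b * 2 ^ (M - L)) - real (a * 2 ^ (M - K))"
    by (simp add: algebra_simps)
  moreover have "0 < (real b / 2 ^ L - real a / 2 ^ K) * 2 ^ M"
    using assms by simp
  ultimately have "real (a * 2 ^ (M - K)) < real (b * 2 ^ (M - L))"
    by linarith
  then have "a * 2 ^ (M - K) < b * 2 ^ (M - L)"
    by (simp only: of_nat_less_iff)
  then have "real (Suc (a * 2 ^ (M - K))) \<le> real (b * 2 ^ (M - L))"
    by (simp only: of_nat_le_iff Suc_le_eq)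
  then have "1 \<le> (real b / 2 ^ L - real a / 2 ^ K) * 2 ^ M"
    unfolding eq by linarith
  then show ?thesis
    by (simp add: M_def field_simps)
qed

lemma beurling_integer_dyadic:
  fixes m k :: "nat \<Rightarrow> nat"
  assumes "\<And>i. q i = real (m i) / 2 ^ k i" "\<And>i. 0 < q i" "\<And>i. 2 ^ k i \<le> q i powr c"
    and "x \<in> beurling_integers q"
  obtains a K where "x = real a / 2 ^ K" "2 ^ K \<le> x powr c"
proof -
  from assms(4) obtain e where "finite {i. e i \<noteq> 0}" and x: "x = (\<Prod>i\<in>{i. e i \<noteq> 0}. q i ^ e i)"
    unfolding beurling_integers_def by auto
  define F where "F = {i. e i \<noteq> 0}"
  have two_power: "(2::real) ^ (\<Sum>i\<in>F. k i * e i) = (\<Prod>i\<in>F. (2 ^ k i) ^ e i)"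
    by (simp add: power_sum power_mult)
  have x_dyadic: "x = real (\<Prod>i\<in>F. m i ^ e i) / 2 ^ (\<Sum>i\<in>F. k i * e i)"
    unfolding x F_def[symmetric] assms(1) two_power by (simp add: power_divide prod_dividef)
  have two_power_le: "(2::real) ^ (\<Sum>i\<in>F. k i * e i) \<le> (\<Prod>i\<in>F. (q i powr c) ^ e i)"
    unfolding two_power by (intro prod_mono conjI power_mono assms(3)) auto
  have "(q i powr c) ^ e i = (q i ^ e i) powr c" for i
    using assms(2)[of i] by (simp add: powr_power powr_powr mult.commute flip: powr_realpow)
  then have "(\<Prod>i\<in>F. (q i powr c) ^ e i) = x powr c"
    unfolding x F_def[symmetric] using assms(2) by (simp add: prod_powr_distrib less_imp_le)
  then show thesis
    using that[OF x_dyadic] two_power_le by simp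
qed

lemma bohr_condition_if_dyadic:
  fixes m k :: "nat \<Rightarrow> nat"
  assumes "beurling_primes q" "\<And>i. q i = real (m i) / 2 ^ k i" "\<And>i. 2 ^ k i \<le> q i powr c" "0 < c"
  shows "beurling_nu q (Suc n) powr (- c) \<le> beurling_nu q (Suc n) - beurling_nu q n"
proof -
  define x y where "x = beurling_nu q n" and "y = beurling_nu q (Suc n)"
  have "x \<in> beurling_integers q" "y \<in> beurling_integers q" "x < y"
    using beurling_nu_enumerates[OF assms(1)] by (auto simp: x_def y_def strict_mono_Suc_iff)
  have q1: "\<And>i. 1 < q i"
    using assms(1) by (simp add: beurling_primes_def)
  then have "1 \<le> x"
    using one_le_beurling_integer[of q x] \<open>x \<in> beurling_integers q\<close> less_imp_le by blast
  obtain a K where a: "x = real a / 2 ^ K" "2 ^ K \<le> x powr c"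
    using beurling_integer_dyadic[OF assms(2) _ assms(3) \<open>x \<in> beurling_integers q\<close>] q1
    by (metis less_trans zero_less_one)
  obtain b L where b: "y = real b / 2 ^ L" "2 ^ L \<le> y powr c"
    using beurling_integer_dyadic[OF assms(2) _ assms(3) \<open>y \<in> beurling_integers q\<close>] q1
    by (metis less_trans zero_less_one)
  have "x powr c \<le> y powr c"
    using \<open>1 \<le> x\<close> \<open>x < y\<close> assms(4) by (intro powr_mono2) auto
  then have "2 ^ max K L \<le> y powr c"
    using a(2) b(2) by (simp add: max_def)
  then have "1 / y powr c \<le> 1 / 2 ^ max K L"
    using \<open>1 \<le> x\<close> \<open>x < y\<close> by (intro divide_left_mono) auto
  also have "\<dots> \<le> y - x"
    using dyadic_gap \<open>x < y\<close> a(1) b(1) by blast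
  finally have "1 / y powr c \<le> y - x" .
  then show ?thesis
    by (simp add: powr_minus_divide x_def y_def)
qed

section \<open>Approximation windows\<close>

lemma ex_power_of_two_scale:
  fixes a b :: real
  assumes "0 < a" "a \<le> b"
  shows "\<exists>k. b \<le> a * 2 ^ k \<and> a * 2 ^ k < 2 * b"
proof -
  obtain k0 where "b / a < 2 ^ k0"
    using real_arch_pow[of 2 "b / a"] by auto
  then have ex: "b \<le> a * 2 ^ k0"
    using assms(1) by (simp add: field_simps)
  define k where "k = (LEAST k. b \<le> a * 2 ^ k)"
  have "b \<le> a * 2 ^ k"
    unfolding k_def by (rule LeastI[of _ k0]) (rule ex)
  moreover have "a * 2 ^ k < 2 * b"
  proof (cases k)
    case 0
    then show ?thesis using assms by simp
  next
    case (Suc k')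
    then have "\<not> b \<le> a * 2 ^ k'"
      using not_less_Least[of k' "\<lambda>k. b \<le> a * 2 ^ k"] by (simp add: k_def)
    then show ?thesis using Suc by simp
  qed
  ultimately show ?thesis by blast
qed

lemma ex_dyadic_multiple_between:
  fixes p :: nat and lo len :: real
  assumes "0 < p" "0 < lo" "real p \<le> len * 2 ^ k"
  shows "\<exists>t. 0 < t \<and> lo \<le> real (t * p) / 2 ^ k \<and> real (t * p) / 2 ^ k \<le> lo + len"
proof -
  define t where "t = nat \<lceil>2 ^ k * lo / real p\<rceil>"
  have "0 \<le> 2 ^ k * lo / real p"
    using assms(1,2) by simp
  then have "real t = of_int \<lceil>2 ^ k * lo / real p\<rceil>"
    by (simp add: t_def)
  then have "2 ^ k * lo / real p \<le> real t" "real t \<le> 2 ^ k * lo / real p + 1"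
    using le_of_int_ceiling of_int_ceiling_le_add_one by metis+
  then have "2 ^ k * lo \<le> real (t * p)" "real (t * p) \<le> 2 ^ k * lo + real p"
    using assms(1) by (simp_all add: field_simps)
  moreover from this(1) have "0 < real (t * p)"
    using assms(2) by (smt (verit) zero_less_power zero_less_mult_iff)
  then have "0 < t"
    by (simp add: zero_less_mult_iff)
  ultimately show ?thesis
    using assms(3) by (intro exI[of _ t]) (simp add: field_simps)
qed

definition approx_window :: "real \<Rightarrow> real \<Rightarrow> (nat \<Rightarrow> real) \<Rightarrow> nat \<Rightarrow> real set" where
  "approx_window \<epsilon> A q n =
     {q n - \<epsilon> * q n powr (- A) / (real n + 1) .. q n - \<epsilon> * q n powr (- A) / (real n + 2)}"

lemma approx_window_le:
  assumes "x \<in> approx_window \<epsilon> A q n" "0 \<le> \<epsilon>"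
  shows "x \<le> q n"
proof -
  have "0 \<le> \<epsilon> * q n powr (- A) / (real n + 2)"
    using assms(2) by simp
  then show ?thesis
    using assms(1) by (auto simp: approx_window_def)
qed

lemma approx_window_offset_le:
  assumes "0 \<le> \<epsilon>"
  shows "\<epsilon> * q n powr (- A) / (real n + 1) \<le> \<epsilon> * q n powr (- A)"
  using divide_left_mono[of 1 "real n + 1" "\<epsilon> * q n powr (- A)"] assms by simp

lemma mult_powr_neg_le_one:
  fixes Q :: real
  assumes "1 \<le> Q" "0 \<le> \<epsilon>" "\<epsilon> \<le> 1" "0 \<le> A"
  shows "\<epsilon> * Q powr (- A) \<le> 1"
proof -
  have "Q powr (- A) \<le> 1"
    using assms(1,4) by (simp add: powr_minus ge_one_powr_ge_zero inverse_le_1_iff)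
  then show ?thesis
    using assms(2,3) by (simp add: mult_le_one)
qed

lemma approx_window_length_le_one:
  assumes "1 \<le> Q" "0 \<le> \<epsilon>" "\<epsilon> \<le> 1" "0 \<le> A"
  shows "\<epsilon> * Q powr (- A) / ((real n + 1) * (real n + 2)) \<le> 1"
proof -
  have "\<epsilon> * Q powr (- A) \<le> 1"
    using mult_powr_neg_le_one[OF assms] .
  moreover have "1 \<le> (real n + 1) * (real n + 2)"
    by (simp add: algebra_simps)
  ultimately show ?thesis
    using assms(2) by (simp add: divide_le_eq_1)
qed

lemma abs_diff_le_if_in_approx_window:
  assumes "x \<in> approx_window \<epsilon> A q n" "0 \<le> \<epsilon>" "\<epsilon> \<le> 1"
  shows "\<bar>q n - x\<bar> \<le> q n powr (- A)"
proof -
  have "\<epsilon> * q n powr (- A) \<le> q n powr (- A)"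
    using assms(2,3) by (simp add: mult_left_le_one_le)
  then show ?thesis
    using assms approx_window_le[OF assms(1,2)] approx_window_offset_le[OF assms(2), of q n A]
    by (auto simp: approx_window_def)
qed

lemma diff_sqrt_mono:
  fixes x y :: real
  assumes "1 \<le> x" "x \<le> y"
  shows "x - sqrt x \<le> y - sqrt y"
proof -
  have sqrt_le: "1 \<le> sqrt x" "sqrt x \<le> sqrt y"
    using assms by auto
  have "0 \<le> (sqrt y - sqrt x) * (sqrt y + sqrt x - 1)"
    by (intro mult_nonneg_nonneg; use sqrt_le in linarith)
  then show ?thesis
    using assms by (simp add: algebra_simps)
qed

lemma sqrt_le_if_in_approx_window:
  assumes "x \<in> approx_window \<epsilon> A q n" "1 \<le> q0" "q0 \<le> q n" "0 \<le> \<epsilon>" "\<epsilon> \<le> q0 - sqrt q0" "0 \<le> A"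
  shows "sqrt (q n) \<le> x"
proof -
  have "q n powr (- A) \<le> 1"
    using assms(2,3,6) by (simp add: powr_minus ge_one_powr_ge_zero inverse_le_1_iff)
  then have "\<epsilon> * q n powr (- A) / (real n + 1) \<le> \<epsilon>"
    using assms(4) approx_window_offset_le[OF assms(4), of q n A] by (smt (verit) mult_left_le)
  moreover have "\<epsilon> \<le> q n - sqrt (q n)"
    using assms(5) diff_sqrt_mono[OF assms(2,3)] by linarith
  ultimately show ?thesis
    using assms(1) by (auto simp: approx_window_def)
qed

lemma strict_mono_if_in_approx_windows:
  assumes "strict_mono q" "\<And>n. 0 < q n" "0 \<le> \<epsilon>" "0 \<le> A"
    and in_window: "\<And>n. f n \<in> approx_window \<epsilon> A q n"
  shows "strict_mono f"
proof (rule strict_mono_Suc_iff[THEN iffD2], intro allI)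
  fix n
  have "q n < q (Suc n)"
    using assms(1) by (simp add: strict_mono_Suc_iff)
  moreover have "q (Suc n) powr (- A) \<le> q n powr (- A)"
    using calculation assms(2)[of n] assms(4) by (intro powr_mono2') auto
  then have "\<epsilon> * q (Suc n) powr (- A) / (real n + 2) \<le> \<epsilon> * q n powr (- A) / (real n + 2)"
    using assms(3) by (intro divide_right_mono mult_left_mono) auto
  ultimately have "q n - \<epsilon> * q n powr (- A) / (real n + 2)
      < q (Suc n) - \<epsilon> * q (Suc n) powr (- A) / (real (Suc n) + 1)"
    by (simp add: add.commute)
  then show "f n < f (Suc n)"
    using in_window[of n] in_window[of "Suc n"] by (auto simp: approx_window_def)
qed

section \<open>Construction of the perturbed primes\<close>

lemma cube_div_le_exp:
  fixes x :: real
  assumes "0 \<le> x"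
  shows "(x / 3) ^ 3 \<le> exp x"
proof -
  have "x / 3 \<le> exp (x / 3)"
    using exp_ge_add_one_self[of "x / 3"] by linarith
  then have "(x / 3) ^ 3 \<le> exp (x / 3) ^ 3"
    using assms by (intro power_mono) auto
  also have "\<dots> = exp x"
    by (simp flip: exp_of_nat_mult)
  finally show ?thesis .
qed

text \<open>
  The exponent c must make q_0^(c/2 - A - 3s - 2) dominate the polynomial losses of the
  construction: the window length eps q^(-A) / ((n+1)(n+2)), the O(n c log q) primes to be
  avoided, and n + 2 <= S q^s.
\<close>

definition large_exponent :: "real \<Rightarrow> real \<Rightarrow> real \<Rightarrow> real \<Rightarrow> real \<Rightarrow> real \<Rightarrow> bool" where
  "large_exponent q0 \<epsilon> A s S c \<longleftrightarrow>
     1 \<le> c \<and> 0 < c / 2 - A - 3 * s - 2 \<and>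
     16 * S ^ 3 * (c / 2 + 1) * c / \<epsilon> < q0 powr (c / 2 - A - 3 * s - 2)"

lemma ex_large_exponent:
  assumes "1 < q0" "0 < \<epsilon>" "1 \<le> S" "0 < A" "0 < s"
  shows "\<exists>c. large_exponent q0 \<epsilon> A s S c"
proof -
  define l where "l = ln q0"
  define B where "B = A + 3 * s + 2"
  define D where "D = 16 * S ^ 3 / \<epsilon>"
  have "0 < l" "0 < B" "0 < D"
    using assms by (auto simp: l_def B_def D_def)
  define u where "u = B + 2 + 216 * D / l ^ 3"
  have "0 \<le> 216 * D / l ^ 3"
    using \<open>0 < l\<close> \<open>0 < D\<close> by simp
  then have u: "B + 1 \<le> u" "216 * D / l ^ 3 < u" "0 < u"
    unfolding u_def using \<open>0 < B\<close> by auto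
  define c where "c = 2 * (B + u)"
  have "16 * S ^ 3 * (c / 2 + 1) * c / \<epsilon> = 2 * D * (B + u + 1) * (B + u)"
    unfolding c_def D_def using assms(2) by (simp add: field_simps)
  also have "\<dots> \<le> 2 * D * (2 * u) * (2 * u)"
    using u \<open>0 < B\<close> \<open>0 < D\<close> by (intro mult_mono) auto
  also have "\<dots> < (l * u / 3) ^ 3"
  proof -
    have "216 * D * u\<^sup>2 < u * l ^ 3 * u\<^sup>2"
      using u \<open>0 < l\<close> by (intro mult_strict_right_mono) (auto simp: field_simps)
    then show ?thesis by (simp add: power3_eq_cube power2_eq_square field_simps)
  qed
  also have "\<dots> \<le> exp (l * u)"
    using \<open>0 < l\<close> u by (intro cube_div_le_exp) simp
  also have "\<dots> = q0 powr (c / 2 - A - 3 * s - 2)"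
    using assms(1) by (simp add: c_def B_def l_def powr_def mult.commute field_simps)
  finally have "16 * S ^ 3 * (c / 2 + 1) * c / \<epsilon> < q0 powr (c / 2 - A - 3 * s - 2)" .
  moreover have "1 \<le> c" "0 < c / 2 - A - 3 * s - 2"
    using u \<open>0 < B\<close> by (simp_all add: c_def B_def field_simps)
  ultimately show ?thesis
    unfolding large_exponent_def by blast
qed

lemma approx_window_scale_gt:
  assumes "large_exponent q0 \<epsilon> A s S c" "1 < q0" "q0 \<le> Q" "0 < \<epsilon>" "0 < s" "1 \<le> S"
    and index_le: "real n + 2 \<le> S * Q powr s"
  shows "8 * (S * (c / 2 + 1) * c * Q powr (s + 2))
           < \<epsilon> * Q powr (- A) / ((real n + 1) * (real n + 2)) * Q powr (c / 2) / 2"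
    (is "8 * ?B < ?y")
proof -
  define H where "H = c / 2 - A - 3 * s - 2"
  have c: "1 \<le> c" and H: "0 < H" and K: "16 * S ^ 3 * (c / 2 + 1) * c / \<epsilon> < q0 powr H"
    using assms(1) by (auto simp: large_exponent_def H_def)
  have "1 < Q" using assms(2,3) by linarith
  have "(real n + 1) * (real n + 2) \<le> (S * Q powr s)\<^sup>2"
    using index_le by (smt (verit) power2_eq_square mult_mono of_nat_0_le_iff)
  also have "\<dots> = S\<^sup>2 * Q powr (2 * s)"
    by (simp add: power_mult_distrib power2_eq_square flip: powr_add)
  finally have "\<epsilon> / 2 * Q powr (c / 2 - A) / (S\<^sup>2 * Q powr (2 * s))
      \<le> \<epsilon> / 2 * Q powr (c / 2 - A) / ((real n + 1) * (real n + 2))"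
    using assms(4,6) \<open>1 < Q\<close> by (intro divide_left_mono) auto
  also have "\<dots> = ?y"
    by (simp add: field_simps flip: powr_add)
  finally have "\<epsilon> / 2 * Q powr (c / 2 - A) / (S\<^sup>2 * Q powr (2 * s)) \<le> ?y" .
  moreover have "Q powr H * Q powr (s + 2) = Q powr (c / 2 - A) / Q powr (2 * s)"
    unfolding powr_add[symmetric] powr_diff[symmetric] H_def
    by (rule arg_cong[where f="\<lambda>x. Q powr x"]) (simp add: algebra_simps)
  then have "\<epsilon> / 2 * Q powr (c / 2 - A) / (S\<^sup>2 * Q powr (2 * s))
      = \<epsilon> / (2 * S\<^sup>2) * (Q powr H * Q powr (s + 2))"
    using assms(6) by (simp add: field_simps)
  moreover have "16 * S ^ 3 * (c / 2 + 1) * c / \<epsilon> < Q powr H"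
    using K powr_mono2[of H q0 Q] H assms(2,3) by linarith
  then have "\<epsilon> / (2 * S\<^sup>2) * (16 * S ^ 3 * (c / 2 + 1) * c / \<epsilon> * Q powr (s + 2))
      < \<epsilon> / (2 * S\<^sup>2) * (Q powr H * Q powr (s + 2))"
    using assms(4,6) \<open>1 < Q\<close> by (intro mult_strict_left_mono mult_strict_right_mono) auto
  moreover have "\<epsilon> / (2 * S\<^sup>2) * (16 * S ^ 3 * (c / 2 + 1) * c / \<epsilon> * Q powr (s + 2)) = 8 * ?B"
    using assms(4,6) by (simp add: field_simps power2_eq_square power3_eq_cube)
  ultimately show ?thesis
    by linarith
qed

lemma ln_approx_window_scale_le:
  assumes "1 < Q" "0 < \<epsilon>" "\<epsilon> \<le> 1" "0 \<le> A" "1 \<le> c" "0 < s" "1 \<le> S"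
    and index_le: "real n + 2 \<le> S * Q powr s"
    and N: "N * ln 2 \<le> real n * (c / 2 + 1) * ln Q" "0 \<le> N"
    and y: "y = \<epsilon> * Q powr (- A) / ((real n + 1) * (real n + 2)) * Q powr (c / 2) / 2" "1 \<le> y"
  shows "(N + 2) * ln y \<le> 2 * (S * (c / 2 + 1) * c * Q powr (s + 2))"
proof -
  define e where "e = c / 2 + 1"
  define len where "len = \<epsilon> * Q powr (- A) / ((real n + 1) * (real n + 2))"
  have lnQ: "0 \<le> ln Q" "ln Q \<le> Q"
    using assms(1) ln_le_minus_one[of Q] by auto
  have "0 \<le> len" "len \<le> 1"
    using approx_window_length_le_one assms(1-4) by (auto simp: len_def)
  then have "len * Q powr (c / 2) \<le> Q powr (c / 2)"
    by (intro mult_left_le_one_le) auto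
  moreover have "0 \<le> len * Q powr (c / 2)"
    using \<open>0 \<le> len\<close> by simp
  moreover have "y = len * Q powr (c / 2) / 2"
    using y(1) by (simp add: len_def)
  ultimately have "y \<le> Q powr (c / 2)"
    by linarith
  then have "ln y \<le> ln (Q powr (c / 2))"
    using y(2) by (subst ln_le_cancel_iff) auto
  then have ln_y: "ln y \<le> c / 2 * ln Q" "0 \<le> ln y"
    using y(2) assms(1) by (auto simp: ln_powr)
  have "N \<le> 2 * real n * e * ln Q"
    using N ln2_ge_two_thirds mult_left_mono[of "1/2" "ln 2" N] unfolding e_def by linarith
  moreover have "2 * real n * e * ln Q \<le> 2 * (S * Q powr s) * e * Q"
    using index_le lnQ assms(5) by (intro mult_mono) (auto simp: e_def)
  moreover have "1 \<le> S * Q powr s * e * Q"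
    using assms(1,5-7) by (intro mult_ge1_I) (auto simp: e_def ge_one_powr_ge_zero)
  ultimately have "N + 2 \<le> 4 * (S * Q powr s) * e * Q" "0 \<le> 4 * (S * Q powr s) * e * Q"
    by linarith+
  moreover have "c / 2 * ln Q \<le> c / 2 * Q"
    using lnQ assms(5) by simp
  then have "ln y \<le> c / 2 * Q"
    using ln_y(1) by linarith
  ultimately have "(N + 2) * ln y \<le> (4 * (S * Q powr s) * e * Q) * (c / 2 * Q)"
    using ln_y(2) by (intro mult_mono) auto
  also have "\<dots> = 2 * (S * e * c * Q powr (s + 2))"
    using assms(1) by (simp add: powr_add field_simps power2_eq_square)
  finally show ?thesis
    unfolding e_def .
qed

lemma ex_prime_le_approx_window_scale:
  assumes "large_exponent q0 \<epsilon> A s S c" "1 < q0" "q0 \<le> q n" "0 < \<epsilon>" "\<epsilon> \<le> 1" "0 < A"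
    "0 < s" "1 \<le> S" "real n + 2 \<le> S * q n powr s"
    and P: "0 < P" "real P \<le> q n powr (real n * (c / 2 + 1))"
  defines "y \<equiv> \<epsilon> * q n powr (- A) / ((real n + 1) * (real n + 2)) * q n powr (c / 2) / 2"
  shows "4 \<le> y \<and> (\<exists>p. prime p \<and> p \<noteq> 2 \<and> \<not> p dvd P \<and> real p \<le> y)"
proof -
  define Q where "Q = q n"
  have "1 < Q" "1 \<le> c"
    using assms(1-3) by (auto simp: Q_def large_exponent_def)
  define B where "B = S * (c / 2 + 1) * c * Q powr (s + 2)"
  define N where "N = real (card (prime_factors P))"
  have "N * ln 2 \<le> ln (real P)"
    unfolding N_def by (rule card_prime_factors_mult_ln2_le[OF P(1)])
  also have "\<dots> \<le> ln (Q powr (real n * (c / 2 + 1)))"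
    using P \<open>1 < Q\<close> by (subst ln_le_cancel_iff) (auto simp: Q_def)
  also have "\<dots> = real n * (c / 2 + 1) * ln Q"
    using \<open>1 < Q\<close> by (simp add: ln_powr)
  finally have N_le: "N * ln 2 \<le> real n * (c / 2 + 1) * ln Q" .
  have "8 * B < y"
    using approx_window_scale_gt[OF assms(1-4,7-9)] by (simp add: B_def y_def Q_def)
  have "1 \<le> B"
    unfolding B_def using \<open>1 < Q\<close> \<open>1 \<le> c\<close> assms(7,8)
    by (intro mult_ge1_I) (auto intro: ge_one_powr_ge_zero)
  have "0 \<le> A" "1 \<le> y" "0 \<le> N" "real n + 2 \<le> S * Q powr s"
    using assms(6,9) \<open>8 * B < y\<close> \<open>1 \<le> B\<close> by (simp_all add: N_def Q_def)
  then have "(N + 2) * ln y \<le> 2 * B"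
    unfolding B_def
    using ln_approx_window_scale_le[OF \<open>1 < Q\<close> assms(4,5) _ \<open>1 \<le> c\<close> assms(7,8) _ N_le _
                                     meta_eq_to_obj_eq[OF y_def, folded Q_def]]
    by blast
  moreover have "y / 4 \<le> y / 2 * ln 2"
    using mult_left_mono[of "1 / 2" "ln 2" "y / 2"] ln2_ge_two_thirds \<open>1 \<le> y\<close> by simp
  ultimately have "(N + 2) * ln y < y / 2 * ln 2"
    using \<open>8 * B < y\<close> by linarith
  moreover have "4 \<le> y"
    using \<open>8 * B < y\<close> \<open>1 \<le> B\<close> by linarith
  ultimately show ?thesis
    using ex_prime_le_not_dvd[OF P(1), of y] unfolding N_def by blast
qed

lemma ex_dyadic_in_approx_window:
  assumes "large_exponent q0 \<epsilon> A s S c" "1 < q0" "q0 \<le> q n" "0 < \<epsilon>" "\<epsilon> \<le> 1" "0 < A"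
    "0 < s" "1 \<le> S" "real n + 2 \<le> S * q n powr s"
    and P: "0 < P" "real P \<le> q n powr (real n * (c / 2 + 1))"
  shows "\<exists>m k. 0 < m \<and> (\<exists>p. prime p \<and> p \<noteq> 2 \<and> p dvd m \<and> \<not> p dvd P) \<and>
           real m / 2 ^ k \<in> approx_window \<epsilon> A q n \<and> 2 ^ k \<le> q n powr (c / 2)"
proof -
  define Q where "Q = q n"
  define len where "len = \<epsilon> * Q powr (- A) / ((real n + 1) * (real n + 2))"
  define y where "y = len * Q powr (c / 2) / 2"
  have "1 < Q"
    using assms(2,3) by (simp add: Q_def)
  obtain p where p: "prime p" "p \<noteq> 2" "\<not> p dvd P" "real p \<le> y" and "4 \<le> y"
    using ex_prime_le_approx_window_scale[where q = q and n = n, OF assms] by (auto simp: y_def len_def Q_def)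
  have "0 < len" "len \<le> 1"
    using assms(4,5,6) \<open>1 < Q\<close> approx_window_length_le_one[of Q \<epsilon> A n] by (auto simp: len_def)
  then obtain k where k: "y \<le> len * 2 ^ k" "len * 2 ^ k < 2 * y"
    using ex_power_of_two_scale[of len y] \<open>4 \<le> y\<close> by auto
  have "len * 2 ^ k < len * Q powr (c / 2)"
    using k(2) by (simp add: y_def)
  then have "2 ^ k \<le> q n powr (c / 2)"
    using \<open>0 < len\<close> by (simp add: Q_def)
  define lo where "lo = Q - \<epsilon> * Q powr (- A) / (real n + 1)"
  have "\<epsilon> * Q powr (- A) \<le> 1"
    using mult_powr_neg_le_one[of Q \<epsilon> A] \<open>1 < Q\<close> assms(4-6) by simp
  then have "0 < lo"
    using approx_window_offset_le[of \<epsilon> "\<lambda>_. Q" n A] assms(4) \<open>1 < Q\<close> by (simp add: lo_def)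
  moreover have "real p \<le> len * 2 ^ k"
    using p(4) k(1) by linarith
  ultimately obtain t where t: "0 < t" "lo \<le> real (t * p) / 2 ^ k" "real (t * p) / 2 ^ k \<le> lo + len"
    using ex_dyadic_multiple_between[of p lo len k] prime_gt_0_nat[OF p(1)] by blast
  have "Z / (real n + 1) - Z / (real n + 2) = Z / ((real n + 1) * (real n + 2))" for Z :: real
    by (simp add: divide_simps) (simp add: algebra_simps)
  from this[of "\<epsilon> * Q powr (- A)"] have "lo + len = Q - \<epsilon> * Q powr (- A) / (real n + 2)"
    unfolding lo_def len_def by linarith
  then have "real (t * p) / 2 ^ k \<in> approx_window \<epsilon> A q n"
    using t by (simp add: approx_window_def lo_def Q_def)
  moreover have "0 < t * p"
    using t(1) prime_gt_0_nat[OF p(1)] by simp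
  ultimately show ?thesis
    using p \<open>2 ^ k \<le> q n powr (c / 2)\<close> by (intro exI[of _ "t * p"] exI[of _ k]) auto
qed

lemma ex_sequence_prod_choice:
  fixes w :: "'a \<Rightarrow> nat"
  assumes "I 0 1" and step: "\<And>n P. I n P \<Longrightarrow> \<exists>x. G n P x \<and> I (Suc n) (P * w x)"
  shows "\<exists>f. \<forall>n. G n (\<Prod>i<n. w (f i)) (f n)"
proof -
  define R where "R n Px \<longleftrightarrow> I n (fst Px) \<and> G n (fst Px) (snd Px) \<and> I (Suc n) (fst Px * w (snd Px))
                    \<and> (n = 0 \<longrightarrow> fst Px = 1)" for n Px
  obtain g where g: "\<And>n. R n (g n)" "\<And>n. fst (g (Suc n)) = fst (g n) * w (snd (g n))"
  proof -
    have "\<exists>g. \<forall>n. R n (g n) \<and> fst (g (Suc n)) = fst (g n) * w (snd (g n))"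
    proof (rule dependent_nat_choice)
      obtain x where "G 0 1 x" "I 1 (1 * w x)"
        using step[OF assms(1)] by auto
      then show "\<exists>Px. R 0 Px"
        using assms(1) by (intro exI[of _ "(1, x)"]) (simp add: R_def)
      fix Px n assume "R n Px"
      then obtain x where "G (Suc n) (fst Px * w (snd Px)) x"
          "I (Suc (Suc n)) (fst Px * w (snd Px) * w x)"
        using step by (auto simp: R_def)
      with \<open>R n Px\<close> show "\<exists>Px'. R (Suc n) Px' \<and> fst Px' = fst Px * w (snd Px)"
        by (intro exI[of _ "(fst Px * w (snd Px), x)"]) (simp add: R_def)
    qed
    then show thesis using that by blast
  qed
  have "fst (g n) = (\<Prod>i<n. w (snd (g i)))" for n
    using g by (induction n) (auto simp: R_def)
  then show ?thesis
    using g(1) by (intro exI[of _ "snd \<circ> g"]) (simp add: R_def)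
qed

lemma mult_dyadic_numerator_le:
  assumes "strict_mono q" "0 < q n" "0 \<le> e" "0 \<le> \<epsilon>"
    and P: "real P \<le> q n powr (real n * (e + 1))"
    and m: "real m / 2 ^ k \<in> approx_window \<epsilon> A q n" "2 ^ k \<le> q n powr e"
  shows "real (P * m) \<le> q (Suc n) powr (real (Suc n) * (e + 1))"
proof -
  have "real m = real m / 2 ^ k * 2 ^ k"
    by simp
  also have "\<dots> \<le> q n * q n powr e"
    using approx_window_le[OF m(1) assms(4)] m(2) assms(2) by (intro mult_mono) auto
  finally have "real P * real m \<le> q n powr (real n * (e + 1)) * (q n * q n powr e)"
    using P by (intro mult_mono) auto
  also have "\<dots> = q n powr (real (Suc n) * (e + 1))"
    using assms(2) by (simp add: algebra_simps powr_add)
  also have "\<dots> \<le> q (Suc n) powr (real (Suc n) * (e + 1))"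
    using assms(1-3) by (intro powr_mono2) (auto simp: strict_mono_less_eq)
  finally show ?thesis
    by simp
qed

lemma ex_dyadic_sequence_in_approx_windows:
  assumes "large_exponent q0 \<epsilon> A s S c" "1 < q0" "strict_mono q" "\<And>n. q0 \<le> q n"
    "0 < \<epsilon>" "\<epsilon> \<le> 1" "0 < A" "0 < s" "1 \<le> S" "\<And>n. real n + 2 \<le> S * q n powr s"
  obtains m k :: "nat \<Rightarrow> nat"
    where "\<And>n. 0 < m n" "\<And>n. \<exists>p. prime p \<and> p \<noteq> 2 \<and> p dvd m n \<and> (\<forall>i<n. \<not> p dvd m i)"
      "\<And>n. real (m n) / 2 ^ k n \<in> approx_window \<epsilon> A q n" "\<And>n. 2 ^ k n \<le> q n powr (c / 2)"
proof -
  define I where "I n P \<longleftrightarrow> 0 < P \<and> real P \<le> q n powr (real n * (c / 2 + 1))" for n P :: nat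
  define G where "G n P mk \<longleftrightarrow> 0 < fst mk \<and> (\<exists>p. prime p \<and> p \<noteq> 2 \<and> p dvd fst mk \<and> \<not> p dvd P) \<and>
      real (fst mk) / 2 ^ snd mk \<in> approx_window \<epsilon> A q n \<and> 2 ^ snd mk \<le> q n powr (c / 2)"
    for n P and mk :: "nat \<times> nat"
  have q_pos: "0 < q n" for n
    using assms(2) assms(4)[of n] by linarith
  have "\<exists>f. \<forall>n. G n (\<Prod>i<n. fst (f i)) (f n)"
  proof (rule ex_sequence_prod_choice)
    show "I 0 1"
      using q_pos[of 0] by (simp add: I_def)
  next
    fix n P assume "I n P"
    then have "0 < P" "real P \<le> q n powr (real n * (c / 2 + 1))"
      by (simp_all add: I_def)
    then obtain m k where "0 < m" "\<exists>p. prime p \<and> p \<noteq> 2 \<and> p dvd m \<and> \<not> p dvd P"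
        "real m / 2 ^ k \<in> approx_window \<epsilon> A q n" "2 ^ k \<le> q n powr (c / 2)"
      using ex_dyadic_in_approx_window[where q = q and n = n, OF assms(1,2) assms(4)[of n] assms(5-9)
                                       assms(10)[of n]]
      by blast
    then have "G n P (m, k)"
      by (simp add: G_def)
    moreover have "I (Suc n) (P * m)"
      using mult_dyadic_numerator_le[OF assms(3) q_pos _ _ _ \<open>real m / 2 ^ k \<in> _\<close> \<open>2 ^ k \<le> _\<close>]
        \<open>I n P\<close> \<open>0 < m\<close> assms(1,5)
      by (simp add: I_def large_exponent_def)
    ultimately show "\<exists>mk. G n P mk \<and> I (Suc n) (P * fst mk)"
      by auto
  qed
  then obtain f where f: "\<And>n. G n (\<Prod>i<n. fst (f i)) (f n)"
    by blast
  have private_prime: "\<exists>p. prime p \<and> p \<noteq> 2 \<and> p dvd fst (f n) \<and> (\<forall>i<n. \<not> p dvd fst (f i))" for n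
  proof -
    obtain p where p: "prime p" "p \<noteq> 2" "p dvd fst (f n)" "\<not> p dvd (\<Prod>i<n. fst (f i))"
      using f[of n] unfolding G_def by blast
    have "\<not> p dvd fst (f i)" if "i < n" for i
      using p(4) dvd_trans[OF _ dvd_prodI[of "{..<n}" i "\<lambda>i. fst (f i)"]] that by blast
    then show ?thesis
      using p(1-3) by blast
  qed
  have props: "0 < fst (f n)" "real (fst (f n)) / 2 ^ snd (f n) \<in> approx_window \<epsilon> A q n"
    "2 ^ snd (f n) \<le> q n powr (c / 2)" for n
    using f[of n] unfolding G_def by blast+
  show thesis
    by (rule that[of "\<lambda>n. fst (f n)" "\<lambda>n. snd (f n)", OF props(1) private_prime props(2,3)])
qed

lemma bohr_beurling_primes_if_dyadic_in_approx_windows: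
  fixes m k :: "nat \<Rightarrow> nat"
  assumes q: "beurling_primes q" and "0 < \<epsilon>" "\<epsilon> \<le> q 0 - sqrt (q 0)" "0 \<le> A" "0 < c"
    and "\<And>n. 0 < m n" "\<And>n. \<exists>p. prime p \<and> p \<noteq> 2 \<and> p dvd m n \<and> (\<forall>i<n. \<not> p dvd m i)"
    and dyadic: "\<And>n. q' n = real (m n) / 2 ^ k n"
    and window: "\<And>n. q' n \<in> approx_window \<epsilon> A q n"
    and two_power_le: "\<And>n. 2 ^ k n \<le> q n powr (c / 2)"
  shows "beurling_primes q' \<and>
         (\<forall>n. beurling_nu q' (Suc n) powr (- c) \<le> beurling_nu q' (Suc n) - beurling_nu q' n)"
proof -
  have sm: "strict_mono q" and lim: "filterlim q at_top sequentially"
    using q by (auto simp: beurling_primes_def)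
  have q0: "1 < q 0" "\<And>n. q 0 \<le> q n"
    using beurling_primes_ge_first[OF q] by auto
  have q_pos: "0 < q n" for n
    using q0 less_le_trans[OF _ q0(2)] by auto
  have sqrt_le: "sqrt (q n) \<le> q' n" for n
    using sqrt_le_if_in_approx_window[OF window _ q0(2)] q0(1) assms(2-4) by simp
  have "1 < sqrt (q 0)" "sqrt (q 0) \<le> sqrt (q n)" for n
    using q0 by auto
  then have q'_gt_1: "1 < q' n" for n
    using sqrt_le[of n] by (meson less_le_trans)
  have "filterlim (\<lambda>n. sqrt (q n)) at_top sequentially"
    by (rule filterlim_compose[OF sqrt_at_top lim])
  then have "filterlim q' at_top sequentially"
    using sqrt_le by (auto intro: filterlim_at_top_mono)
  moreover have "strict_mono q'"
    using strict_mono_if_in_approx_windows[OF sm q_pos _ _ window] assms(2,4) by simp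
  ultimately have "beurling_primes q'"
    using beurling_primes_if_dyadic_private_primes[OF _ q'_gt_1 _ dyadic assms(6,7)] by blast
  moreover have "2 ^ k n \<le> q' n powr c" for n
  proof -
    have "q n powr (c / 2) = sqrt (q n) powr c"
      using q_pos[of n] by (simp add: powr_half_sqrt[symmetric] powr_powr)
    also have "\<dots> \<le> q' n powr c"
      using sqrt_le[of n] q_pos[of n] assms(5) by (intro powr_mono2) auto
    finally show ?thesis
      using two_power_le[of n] by linarith
  qed
  ultimately show ?thesis
    using bohr_condition_if_dyadic[OF \<open>beurling_primes q'\<close> dyadic _ assms(5)] by blast
qed

theorem theorem1p2:
  fixes q :: "nat \<Rightarrow> real" and A :: real
  assumes "beurling_primes q" and "q 0 > 1" and "abscissa_finite q" and "A > 0"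
  shows "\<exists>q'. beurling_primes q' \<and>
           (\<forall>n. \<bar>q n - q' n\<bar> \<le> q n powr (- A)) \<and>
           (\<exists>c1 > 0. \<exists>c2 > 0. \<forall>n.
              beurling_nu q' (Suc n) - beurling_nu q' n \<ge> c1 * beurling_nu q' (Suc n) powr (- c2))"
  \<comment> \<open>The hypothesis q 0 > 1 is already part of beurling_primes q.\<close>
proof -
  obtain s S where s: "0 < s" "1 \<le> S" "\<And>n. real n + 2 \<le> S * q n powr s"
    using abscissa_finite_imp_index_le_power[OF assms(1,3)] by blast
  have q0: "1 < q 0" "\<And>n. q 0 \<le> q n" and sm: "strict_mono q"
    using beurling_primes_ge_first[OF assms(1)] assms(1) by (auto simp: beurling_primes_def)
  define \<epsilon> where "\<epsilon> = min 1 (q 0 - sqrt (q 0))"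
  have "sqrt (q 0) * 1 < sqrt (q 0) * sqrt (q 0)"
    using q0(1) by (intro mult_strict_left_mono) auto
  then have \<epsilon>: "0 < \<epsilon>" "\<epsilon> \<le> 1" "\<epsilon> \<le> q 0 - sqrt (q 0)"
    using q0(1) by (auto simp: \<epsilon>_def)
  obtain c where c: "large_exponent (q 0) \<epsilon> A s S c"
    using ex_large_exponent[OF q0(1) \<epsilon>(1) s(2) assms(4) s(1)] by blast
  then have "0 < c"
    by (simp add: large_exponent_def)
  obtain m k where mk: "\<And>n. 0 < m n" "\<And>n. \<exists>p. prime p \<and> p \<noteq> 2 \<and> p dvd m n \<and> (\<forall>i<n. \<not> p dvd m i)"
      "\<And>n. real (m n) / 2 ^ k n \<in> approx_window \<epsilon> A q n" "\<And>n. 2 ^ k n \<le> q n powr (c / 2)"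
    using ex_dyadic_sequence_in_approx_windows[OF c q0(1) sm q0(2) \<epsilon>(1,2) assms(4) s] by blast
  define q' where "q' n = real (m n) / 2 ^ k n" for n
  have window: "q' n \<in> approx_window \<epsilon> A q n" for n
    using mk(3) by (simp add: q'_def)
  have "beurling_primes q' \<and>
        (\<forall>n. beurling_nu q' (Suc n) powr (- c) \<le> beurling_nu q' (Suc n) - beurling_nu q' n)"
    using assms(4) \<open>0 < c\<close> \<epsilon>
    by (intro bohr_beurling_primes_if_dyadic_in_approx_windows[OF assms(1) _ _ _ _ mk(1,2) q'_def window
               mk(4)]) simp_all
  moreover have "\<bar>q n - q' n\<bar> \<le> q n powr (- A)" for n
    using abs_diff_le_if_in_approx_window[OF window] \<epsilon> by simp
  ultimately show ?thesis
    using \<open>0 < c\<close> by (intro exI[of _ q'] conjI allI exI[of _ "1::real"] exI[of _ c]) auto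
qed

end
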